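(* Let $q$ be a power of $2$, $\beta$ a primitive element of $\mathbb{F}_{q^2}$, $\mathrm{Tr}(x)=x+x^q$, and $\Psi:\mathbb{F}_{q^2}^n\to\mathbb{F}_q^{2n}$, $\Psi(\alpha_0,\ldots,\alpha_{n-1})=\left(\mathrm{Tr}(\beta\alpha_0),\ldots,\mathrm{Tr}(\beta\alpha_{n-1}),\mathrm{Tr}(\beta^q\alpha_0),\ldots,\mathrm{Tr}(\beta^q\alpha_{n-1})\right)$. Let $g(x)\in\mathbb{F}_q[x]$ be a monic divisor of $x^{2n}-1$ with $g(x)\neq x^{2n}-1$ and $k=\deg g$, $\mathscr{D}=\langle g(x)\rangle$ the $q$-ary linear cyclic code of length $2n$ it generates, and $\mathscr{C}=\Psi^{-1}(\mathscr{D})$. Let $h(x)=(x^{2n}-1)/g(x)=h_0+\cdots+h_{2n-k}x^{2n-k}$, $h^*(x)=\frac{1}{h_{2n-k}}x^{2n-k}h(1/x)$, $V_{h^*(x)}\in\mathbb{F}_q^{2n}$ its coefficient vector, and $W_{h^{\epsilon}(x)}=\Psi^{-1}(\tau(V_{h^*(x)}))\in\mathbb{F}_{q^2}^n$. Then the $k$ vectors $W_{h^{\epsilon}(x)},T(W_{h^{\epsilon}(x)}),\ldots,T^{k-1}(W_{h^{\epsilon}(x)})$ form an $\mathbb{F}_q$-basis of the alternating dual $\mathscr{C}^{\perp_a}$.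
   Context: $\sigma(v_0,\ldots,v_{2n-1})=(v_{2n-1},v_0,\ldots,v_{2n-2})$, $\tau(v_0,\ldots,v_{2n-1})=(-v_n,\ldots,-v_{2n-1},v_0,\ldots,v_{n-1})$, and $T(c_0,\ldots,c_{n-1})=(c_{n-1}^q,c_0,\ldots,c_{n-2})$. The alternating inner product on $\mathbb{F}_{q^2}^n$ is $\langle u,v\rangle_a=(\beta^{2q}-\beta^2)\sum_{i=0}^{n-1}(u_iv_i^q-u_i^qv_i)$ and $\mathscr{C}^{\perp_a}=\{v\in\mathbb{F}_{q^2}^n:\langle u,v\rangle_a=0\ \forall u\in\mathscr{C}\}$. *)

theory Defs
  imports "HOL-Computational_Algebra.Polynomial"
begin

text \<open>Vectors of length m over a field are modelled as functions nat \<Rightarrow> 'a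
  vanishing at all indices \<ge> m.\<close>

definition vecs :: "nat \<Rightarrow> (nat \<Rightarrow> 'a::zero) set" where
  "vecs m = {v. \<forall>i\<ge>m. v i = 0}"

definition subfield_q :: "nat \<Rightarrow> 'a::field set" where
  "subfield_q q = {x. x ^ q = x}"

definition primitive_elem :: "'a::field \<Rightarrow> bool" where
  "primitive_elem b \<longleftrightarrow> b \<noteq> 0 \<and> (\<forall>x. x \<noteq> 0 \<longrightarrow> (\<exists>i::nat. b ^ i = x))"

definition Tr :: "nat \<Rightarrow> 'a::field \<Rightarrow> 'a" where
  "Tr q x = x + x ^ q"

definition Psi :: "nat \<Rightarrow> nat \<Rightarrow> 'a::field \<Rightarrow> (nat \<Rightarrow> 'a) \<Rightarrow> (nat \<Rightarrow> 'a)" where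
  "Psi q n b a = (\<lambda>i. if i < n then Tr q (b * a i)
                      else if i < 2 * n then Tr q (b ^ q * a (i - n)) else 0)"

definition Psi_inv :: "nat \<Rightarrow> nat \<Rightarrow> 'a::field \<Rightarrow> (nat \<Rightarrow> 'a) \<Rightarrow> (nat \<Rightarrow> 'a)" where
  "Psi_inv q n b = inv_into (vecs n) (Psi q n b)"

definition tau :: "nat \<Rightarrow> (nat \<Rightarrow> 'a::ab_group_add) \<Rightarrow> (nat \<Rightarrow> 'a)" where
  "tau n v = (\<lambda>i. if i < n then - v (n + i) else if i < 2 * n then v (i - n) else 0)"

definition T_map :: "nat \<Rightarrow> nat \<Rightarrow> (nat \<Rightarrow> 'a::field) \<Rightarrow> (nat \<Rightarrow> 'a)" where
  "T_map q n c = (\<lambda>i. if i = 0 then c (n - 1) ^ q else if i < n then c (i - 1) else 0)"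

definition alt_ip :: "nat \<Rightarrow> nat \<Rightarrow> 'a::field \<Rightarrow> (nat \<Rightarrow> 'a) \<Rightarrow> (nat \<Rightarrow> 'a) \<Rightarrow> 'a" where
  "alt_ip q n b u v = (b ^ (2 * q) - b ^ 2) * (\<Sum>i<n. u i * v i ^ q - u i ^ q * v i)"

definition alt_dual :: "nat \<Rightarrow> nat \<Rightarrow> 'a::field \<Rightarrow> (nat \<Rightarrow> 'a) set \<Rightarrow> (nat \<Rightarrow> 'a) set" where
  "alt_dual q n b C = {v \<in> vecs n. \<forall>u\<in>C. alt_ip q n b u v = 0}"

definition coeff_vec :: "nat \<Rightarrow> 'a::zero poly \<Rightarrow> (nat \<Rightarrow> 'a)" where
  "coeff_vec m f = (\<lambda>i. if i < m then coeff f i else 0)"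

definition poly_over :: "'a::zero set \<Rightarrow> 'a poly \<Rightarrow> bool" where
  "poly_over S f \<longleftrightarrow> (\<forall>i. coeff f i \<in> S)"

text \<open>The q-ary cyclic code of length m generated by g (polynomials over F_q
  embedded in F_{q^2}[x]).\<close>
definition cyclic_code :: "'a::field set \<Rightarrow> nat \<Rightarrow> 'a poly \<Rightarrow> (nat \<Rightarrow> 'a) set" where
  "cyclic_code F m g = {coeff_vec m ((a * g) mod (monom 1 m - 1)) | a. poly_over F a}"

definition lin_comb :: "nat \<Rightarrow> (nat \<Rightarrow> nat \<Rightarrow> 'a::field) \<Rightarrow> (nat \<Rightarrow> 'a) \<Rightarrow> (nat \<Rightarrow> 'a)" where
  "lin_comb k ws c = (\<lambda>i. \<Sum>j<k. c j * ws j i)"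

definition is_basis_over :: "'a::field set \<Rightarrow> nat \<Rightarrow> (nat \<Rightarrow> nat \<Rightarrow> 'a) \<Rightarrow> (nat \<Rightarrow> 'a) set \<Rightarrow> bool" where
  "is_basis_over F k ws S \<longleftrightarrow>
     (\<forall>c. (\<forall>j<k. c j \<in> F) \<and> lin_comb k ws c = (\<lambda>_. 0) \<longrightarrow> (\<forall>j<k. c j = 0)) \<and>
     S = {lin_comb k ws c | c. \<forall>j<k. c j \<in> F}"

end

theory Submission
  imports Defs "HOL-Computational_Algebra.Primes"
begin

text \<open>Psi is an F_q-linear bijection from F_{q^2}^n onto F_q^{2n}; under it the alternating
  form becomes the Euclidean pairing <Psi u, tau (Psi v)> and T becomes the cyclic shift sigma,
  which in characteristic 2 commutes with tau. Hence the alternating dual of C = Psi^-1(D) is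
  the preimage under tau o Psi of the Euclidean dual of D, and a basis sigma^j V of that dual pulls
  back to the basis T^j W. For the cyclic code D = <g> the vectors x^j h*(x), j < k, form such a
  basis: they are orthogonal to D because g h = x^2n - 1, independent for degree reasons, and they
  span because a vector orthogonal to every x^s g is divisible by h*.\<close>

section \<open>Finite fields\<close>

lemma finite_field_power_card_eq_self:
  fixes x :: "'a::{field,finite}"
  shows "x ^ card (UNIV :: 'a set) = x"
proof (cases "x = 0")
  case True
  then show ?thesis by (simp add: finite_UNIV_card_ge_0)
next
  case False
  let ?U = "UNIV - {0 :: 'a}"
  have "(\<Prod>y\<in>?U. y) = (\<Prod>y\<in>?U. x * y)"
    by (rule prod.reindex_bij_witness[of _ "\<lambda>y. x * y" "\<lambda>y. y / x"]) (use False in auto)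
  also have "\<dots> = x ^ (card (UNIV :: 'a set) - 1) * (\<Prod>y\<in>?U. y)"
    by (simp add: prod.distrib card_Diff_singleton)
  finally have "x ^ (card (UNIV :: 'a set) - 1) = 1"
    by simp
  then have "x ^ Suc (card (UNIV :: 'a set) - 1) = x"
    by simp
  then show ?thesis
    by (simp add: finite_UNIV_card_ge_0)
qed

lemma finite_field_even_card_imp_CHAR_2:
  assumes "even (card (UNIV :: 'a::{field,finite} set))"
  shows "CHAR('a) = 2"
proof -
  have "(-1 :: 'a) = 1"
    using finite_field_power_card_eq_self[of "-1 :: 'a"] assms by simp
  then have "of_nat 2 = (0 :: 'a)" by (simp add: eq_neg_iff_add_eq_0)
  then have "CHAR('a) dvd 2" by (simp only: of_nat_eq_0_iff_char_dvd)
  then show ?thesis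
    using CHAR_not_1[where 'a = 'a] two_is_prime_nat unfolding prime_nat_iff by auto
qed

section \<open>The subfield fixed by the q-th power map\<close>

lemma subfield_q_zero: "0 < q \<Longrightarrow> 0 \<in> subfield_q q"
  by (simp add: subfield_q_def)

lemma subfield_q_one: "1 \<in> subfield_q q"
  by (simp add: subfield_q_def)

lemma subfield_q_mult:
  "x \<in> subfield_q q \<Longrightarrow> y \<in> subfield_q q \<Longrightarrow> (x * y :: 'a::field) \<in> subfield_q q"
  by (simp add: subfield_q_def power_mult_distrib)

lemma card_subfield_q_le:
  assumes "1 < q"
  shows "card (subfield_q q :: 'a::field set) \<le> q"
proof -
  define p :: "'a poly" where "p = monom 1 q + monom (- 1) 1"
  have "degree p = q"
    using assms unfolding p_def by (subst degree_add_eq_left) (simp_all add: degree_monom_eq)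
  moreover from this have "p \<noteq> 0"
    using assms by auto
  ultimately have "card {x. poly p x = 0} \<le> q"
    using card_poly_roots_bound[of p] by simp
  moreover have "{x. poly p x = 0} = subfield_q q"
    by (auto simp: p_def subfield_q_def poly_monom)
  ultimately show ?thesis
    by simp
qed

text \<open>If the primitive element lay in the subfield, so would all its powers, that is, the
  whole field.\<close>
lemma primitive_elem_not_in_subfield_q:
  assumes "primitive_elem b" "1 < q" "q < card (UNIV :: 'a::{field,finite} set)"
  shows "(b :: 'a) ^ q \<noteq> b"
proof
  assume fixed: "b ^ q = b"
  have "x \<in> subfield_q q" for x :: 'a
  proof (cases "x = 0")
    case False
    then obtain i where "x = b ^ i"
      using assms(1) by (auto simp: primitive_elem_def)
    moreover have "(b ^ i) ^ q = (b ^ q) ^ i"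
      by (simp flip: power_mult add: mult.commute)
    ultimately show ?thesis
      using fixed by (simp add: subfield_q_def)
  qed (use assms(2) in \<open>simp add: subfield_q_def\<close>)
  then have "card (UNIV :: 'a set) \<le> q"
    using card_subfield_q_le[OF assms(2), where 'a = 'a] by (metis UNIV_eq_I)
  then show False
    using assms(3) by simp
qed

definition frobenius_poly :: "nat \<Rightarrow> 'a::field poly \<Rightarrow> 'a poly" where
  "frobenius_poly q p = map_poly (\<lambda>x. x ^ q) p"

context
  fixes q :: nat
  assumes power_q_add: "\<And>x y :: 'a::field. (x + y) ^ q = x ^ q + y ^ q"
    and q_pos: "0 < q"
begin

lemma power_q_sum: "(sum f A :: 'a) ^ q = (\<Sum>i\<in>A. f i ^ q)"
  by (induction A rule: infinite_finite_induct) (simp_all add: q_pos power_q_add)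

lemma power_q_minus: "(- x :: 'a) ^ q = - (x ^ q)"
  using power_q_add[of "- x" x] q_pos by (simp add: eq_neg_iff_add_eq_0 zero_power)

lemma power_q_diff: "(x - y :: 'a) ^ q = x ^ q - y ^ q"
  using power_q_add[of x "- y"] by (simp add: power_q_minus)

lemma subfield_q_diff:
  "x \<in> subfield_q q \<Longrightarrow> y \<in> subfield_q q \<Longrightarrow> (x - y :: 'a) \<in> subfield_q q"
  by (simp add: subfield_q_def power_q_diff)

lemma subfield_q_sum:
  "(\<And>i. i \<in> A \<Longrightarrow> f i \<in> subfield_q q) \<Longrightarrow> (sum f A :: 'a) \<in> subfield_q q"
  by (simp add: subfield_q_def power_q_sum)

lemma coeff_frobenius_poly: "coeff (frobenius_poly q p) i = (coeff p i :: 'a) ^ q"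
  by (simp add: frobenius_poly_def coeff_map_poly q_pos)

lemma frobenius_poly_add: "frobenius_poly q (p + r) = frobenius_poly q p + frobenius_poly q (r :: 'a poly)"
  by (rule poly_eqI) (simp add: coeff_frobenius_poly power_q_add)

lemma frobenius_poly_mult: "frobenius_poly q (p * r) = frobenius_poly q p * frobenius_poly q (r :: 'a poly)"
  by (rule poly_eqI) (simp add: coeff_frobenius_poly coeff_mult power_q_sum power_mult_distrib)

lemma frobenius_poly_eq_iff: "frobenius_poly q p = p \<longleftrightarrow> poly_over (subfield_q q) (p :: 'a poly)"
  by (simp add: poly_eq_iff coeff_frobenius_poly poly_over_def subfield_q_def)

lemma poly_over_subfield_q_mult:
  "poly_over (subfield_q q) p \<Longrightarrow> poly_over (subfield_q q) r
    \<Longrightarrow> poly_over (subfield_q q) (p * r :: 'a poly)"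
  by (simp flip: frobenius_poly_eq_iff add: frobenius_poly_mult)

text \<open>Applying the Frobenius to a division with remainder by a polynomial over the subfield
  yields another one, so by uniqueness quotient and remainder are fixed.\<close>
lemma poly_over_subfield_q_div_mod:
  fixes p m :: "'a poly"
  assumes p: "poly_over (subfield_q q) p" and m: "poly_over (subfield_q q) m"
  shows "poly_over (subfield_q q) (p div m)" "poly_over (subfield_q q) (p mod m)"
proof -
  let ?\<phi> = "frobenius_poly q"
  have "p = ?\<phi> (p div m * m + p mod m)" using p by (simp flip: frobenius_poly_eq_iff)
  also have "\<dots> = ?\<phi> (p div m) * m + ?\<phi> (p mod m)"
    using m unfolding frobenius_poly_add frobenius_poly_mult frobenius_poly_eq_iff[symmetric] by simp
  finally have p_eq: "p = ?\<phi> (p div m) * m + ?\<phi> (p mod m)" .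
  have "p div m = ?\<phi> (p div m) \<and> p mod m = ?\<phi> (p mod m)"
  proof (cases "m = 0")
    case False
    have "degree (?\<phi> (p mod m)) \<le> degree (p mod m)"
      unfolding frobenius_poly_def by (rule map_poly_degree_leq)
    then have "?\<phi> (p mod m) = 0 \<or> degree (?\<phi> (p mod m)) < degree m"
      using degree_mod_less[OF False, of p] by (auto simp: frobenius_poly_def)
    then have rem: "?\<phi> (p mod m) div m = 0" "?\<phi> (p mod m) mod m = ?\<phi> (p mod m)"
      by (auto simp: div_poly_less mod_poly_less)
    show ?thesis
      using False rem by (subst (1 3) p_eq; simp)
  next
    case True
    have "?\<phi> 0 = 0"
      by (simp add: frobenius_poly_def)
    then show ?thesis
      using True p by (simp flip: frobenius_poly_eq_iff)
  qed
  then show "poly_over (subfield_q q) (p div m)" "poly_over (subfield_q q) (p mod m)"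
    by (metis frobenius_poly_eq_iff)+
qed

end

section \<open>Vectors, cyclic shifts and Euclidean duals\<close>

definition cyclic_shift :: "nat \<Rightarrow> (nat \<Rightarrow> 'a::zero) \<Rightarrow> nat \<Rightarrow> 'a" where
  "cyclic_shift N v = (\<lambda>i. if i = 0 then v (N - 1) else if i < N then v (i - 1) else 0)"

definition dot :: "nat \<Rightarrow> (nat \<Rightarrow> 'a::comm_ring_1) \<Rightarrow> (nat \<Rightarrow> 'a) \<Rightarrow> 'a" where
  "dot N x y = (\<Sum>i<N. x i * y i)"

definition euclid_dual ::
  "'a set \<Rightarrow> nat \<Rightarrow> (nat \<Rightarrow> 'a::comm_ring_1) set \<Rightarrow> (nat \<Rightarrow> 'a) set" where
  "euclid_dual F N D = {y \<in> vecs N. (\<forall>i. y i \<in> F) \<and> (\<forall>d\<in>D. dot N d y = 0)}"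

lemma sum_lessThan_add: "(\<Sum>i<m + n. f i) = (\<Sum>i<m. f i) + (\<Sum>i<n. f (m + i :: nat))"
  by (induction n) (simp_all add: add.assoc)

lemma coeff_vec_in_vecs: "coeff_vec N p \<in> vecs N"
  by (simp add: coeff_vec_def vecs_def)

lemma coeff_vec_in_subset: "poly_over F p \<Longrightarrow> 0 \<in> F \<Longrightarrow> coeff_vec N p i \<in> F"
  by (simp add: coeff_vec_def poly_over_def)

lemma dot_coeff_vec_monom_degree_mult:
  fixes g R :: "'a::comm_ring_1 poly"
  assumes "degree R < N"
  shows "dot N (coeff_vec N (monom 1 (degree R) * g)) (coeff_vec N R) = coeff g 0 * lead_coeff R"
proof -
  have "dot N (coeff_vec N (monom 1 (degree R) * g)) (coeff_vec N R)
      = (\<Sum>i<N. if i = degree R then coeff g 0 * lead_coeff R else 0)"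
    unfolding dot_def
  proof (rule sum.cong)
    fix i
    assume "i \<in> {..<N}"
    then show "coeff_vec N (monom 1 (degree R) * g) i * coeff_vec N R i
        = (if i = degree R then coeff g 0 * lead_coeff R else 0)"
      by (cases "degree R < i") (auto simp: coeff_vec_def coeff_monom_mult coeff_eq_0)
  qed simp
  then show ?thesis
    using assms by simp
qed

lemma lin_comb_in_vecs: "(\<And>j. j < k \<Longrightarrow> ws j \<in> vecs N) \<Longrightarrow> lin_comb k ws c \<in> vecs N"
  by (simp add: lin_comb_def vecs_def)

lemma dot_lin_comb_right: "dot N x (lin_comb k ws c) = (\<Sum>j<k. c j * dot N x (ws j))"
  unfolding dot_def lin_comb_def
  by (simp add: sum_distrib_left sum_distrib_right algebra_simps sum.swap[of _ "{..<N}"])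

lemma cyclic_shift_coeff_vec:
  fixes p :: "'a::comm_semiring_1 poly"
  assumes "0 < N" "coeff p (N - 1) = 0"
  shows "cyclic_shift N (coeff_vec N p) = coeff_vec N (monom 1 1 * p)"
  using assms by (auto simp: fun_eq_iff cyclic_shift_def coeff_vec_def coeff_monom_mult)

lemma is_basis_over_preimage:
  assumes inj: "inj_on \<phi> (vecs n)"
    and zero: "\<phi> (\<lambda>_. 0) = (\<lambda>_. 0)"
    and ws: "\<And>j. j < k \<Longrightarrow> ws j \<in> vecs n"
    and lin: "\<And>c. \<forall>j<k. c j \<in> F \<Longrightarrow> \<phi> (lin_comb k ws c) = lin_comb k (\<lambda>j. \<phi> (ws j)) c"
    and basis: "is_basis_over F k (\<lambda>j. \<phi> (ws j)) S"
  shows "is_basis_over F k ws {v \<in> vecs n. \<phi> v \<in> S}"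
proof -
  have lin_comb_ws: "lin_comb k ws c \<in> vecs n" for c
    using ws by (rule lin_comb_in_vecs)
  have indep: "\<forall>j<k. c j = 0" if c: "\<forall>j<k. c j \<in> F" and "lin_comb k ws c = (\<lambda>_. 0)" for c
  proof -
    have "lin_comb k (\<lambda>j. \<phi> (ws j)) c = (\<lambda>_. 0)"
      using lin[OF c] zero \<open>lin_comb k ws c = (\<lambda>_. 0)\<close> by simp
    then show ?thesis
      using basis c by (simp add: is_basis_over_def)
  qed
  have span: "\<exists>c. (\<forall>j<k. c j \<in> F) \<and> v = lin_comb k ws c" if v: "v \<in> vecs n" "\<phi> v \<in> S" for v
  proof -
    obtain c where c: "\<forall>j<k. c j \<in> F" "\<phi> v = lin_comb k (\<lambda>j. \<phi> (ws j)) c"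
      using basis v(2) by (auto simp: is_basis_over_def)
    then have "\<phi> v = \<phi> (lin_comb k ws c)"
      using lin by simp
    then have "v = lin_comb k ws c"
      using v(1) lin_comb_ws by (rule inj_onD[OF inj])
    then show ?thesis
      using c(1) by blast
  qed
  have "lin_comb k ws c \<in> {v \<in> vecs n. \<phi> v \<in> S}" if "\<forall>j<k. c j \<in> F" for c
    using basis lin[OF that] lin_comb_ws that by (auto simp: is_basis_over_def)
  then show ?thesis
    using indep span unfolding is_basis_over_def by blast
qed

section \<open>The Euclidean dual of a cyclic code\<close>

locale cyclic_code_generator =
  fixes q N :: nat and g :: "'a::field poly"
  assumes power_q_add: "\<And>x y :: 'a. (x + y) ^ q = x ^ q + y ^ q"
    and q_pos: "0 < q"
    and N_pos: "0 < N"
    and g_over: "poly_over (subfield_q q) g"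
    and g_monic: "lead_coeff g = 1"
    and g_dvd: "g dvd monom 1 N - 1"
    and g_proper: "g \<noteq> monom 1 N - 1"
begin

abbreviation F :: "'a set" where "F \<equiv> subfield_q q"
abbreviation k :: nat where "k \<equiv> degree g"
abbreviation modulus :: "'a poly" where "modulus \<equiv> monom 1 N - 1"

definition h :: "'a poly" where "h = modulus div g"

text \<open>The factor 1 / lead_coeff h in the normalised reciprocal h* of the statement is 1, as
  h is monic (lead_coeff_h).\<close>
definition hstar :: "'a poly" where "hstar = reflect_poly h"

lemma coeff_modulus: "coeff modulus i = (if i = N then 1 else 0) - (if i = 0 then 1 else 0)"
  by (simp add: coeff_monom)

lemma degree_modulus: "degree modulus = N"
proof (rule antisym)
  show "degree modulus \<le> N" by (rule degree_le) (simp add: coeff_modulus)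
  show "N \<le> degree modulus" by (rule le_degree) (use N_pos in \<open>simp add: coeff_modulus\<close>)
qed

lemma modulus_nonzero: "modulus \<noteq> 0"
  using degree_modulus N_pos by auto

lemma poly_over_modulus: "poly_over F modulus"
  by (simp add: poly_over_def coeff_modulus subfield_q_diff[OF power_q_add q_pos]
      subfield_q_zero[OF q_pos] subfield_q_one)

lemma poly_over_monom: "c \<in> F \<Longrightarrow> poly_over F (monom c s)"
  by (simp add: poly_over_def coeff_monom subfield_q_zero[OF q_pos])

lemma g_mult_h: "g * h = modulus"
  unfolding h_def using g_dvd by simp

lemma g_nonzero: "g \<noteq> 0" and h_nonzero: "h \<noteq> 0"
  using g_mult_h modulus_nonzero by auto

lemma degree_g_add_degree_h: "k + degree h = N"
  using degree_mult_eq[OF g_nonzero h_nonzero] by (simp add: g_mult_h degree_modulus)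

lemma lead_coeff_h: "lead_coeff h = 1"
proof -
  have "lead_coeff modulus = 1"
    using degree_modulus N_pos by (simp add: coeff_modulus)
  then show ?thesis
    using lead_coeff_mult[of g h] by (simp add: g_mult_h g_monic)
qed

lemma degree_g_less: "k < N"
proof (rule ccontr)
  assume "\<not> k < N"
  then have "degree h = 0"
    using degree_g_add_degree_h by simp
  then have "h = [:1:]"
    using lead_coeff_h degree_0_id[of h] by simp
  then show False
    using g_mult_h g_proper by (simp add: one_pCons)
qed

lemma degree_h: "degree h = N - k"
  using degree_g_add_degree_h by simp

lemma coeff_0_g_mult_h: "coeff g 0 * coeff h 0 = -1"
  using arg_cong[OF g_mult_h, of "\<lambda>p. coeff p 0"] N_pos by (simp add: coeff_mult_0 coeff_modulus)

lemma coeff_0_g_nonzero: "coeff g 0 \<noteq> 0"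
  using coeff_0_g_mult_h by auto

lemma coeff_0_h_nonzero: "coeff h 0 \<noteq> 0"
  using coeff_0_g_mult_h by auto

lemma poly_over_h: "poly_over F h"
  unfolding h_def using poly_over_modulus g_over by (rule poly_over_subfield_q_div_mod[OF power_q_add q_pos])

lemma degree_hstar: "degree hstar = N - k"
  using coeff_0_h_nonzero degree_h by (simp add: hstar_def)

lemma coeff_hstar: "coeff hstar i = (if N - k < i then 0 else coeff h (N - k - i))"
  by (simp add: hstar_def coeff_reflect_poly degree_h)

lemma coeff_0_hstar: "coeff hstar 0 = 1"
  using lead_coeff_h by (simp add: hstar_def)

lemma hstar_nonzero: "hstar \<noteq> 0"
  using coeff_0_hstar by auto

lemma poly_over_hstar: "poly_over F hstar"
  using poly_over_h by (simp add: poly_over_def coeff_hstar subfield_q_zero[OF q_pos])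

lemma cyclic_code_subset: "cyclic_code F N g \<subseteq> {y \<in> vecs N. \<forall>i. y i \<in> F}"
  unfolding cyclic_code_def
proof safe
  fix a :: "'a poly"
  assume "poly_over F a"
  then have "poly_over F (a * g)"
    using g_over by (rule poly_over_subfield_q_mult[OF power_q_add q_pos])
  then have "poly_over F ((a * g) mod modulus)"
    using poly_over_modulus by (rule poly_over_subfield_q_div_mod(2)[OF power_q_add q_pos])
  then show "coeff_vec N ((a * g) mod modulus) i \<in> F" for i
    using subfield_q_zero[OF q_pos] by (rule coeff_vec_in_subset)
  show "coeff_vec N ((a * g) mod modulus) \<in> vecs N"
    by (rule coeff_vec_in_vecs)
qed

lemma funpow_cyclic_shift_hstar:
  "j < k \<Longrightarrow> (cyclic_shift N ^^ j) (coeff_vec N hstar) = coeff_vec N (monom 1 j * hstar)"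
proof (induction j)
  case (Suc j)
  have "degree (monom 1 j * hstar) \<le> j + (N - k)"
    using degree_mult_le[of "monom 1 j" hstar] degree_monom_le[of "1::'a" j] degree_hstar by linarith
  also have "\<dots> < N - 1"
    using Suc.prems degree_g_less by linarith
  finally have "coeff (monom 1 j * hstar) (N - 1) = 0"
    by (rule coeff_eq_0)
  then have "cyclic_shift N (coeff_vec N (monom 1 j * hstar)) = coeff_vec N (monom 1 (Suc j) * hstar)"
    using N_pos by (simp add: cyclic_shift_coeff_vec mult.assoc[symmetric] mult_monom)
  then show ?case
    using Suc by simp
qed simp

lemma coeff_monom_mult_hstar:
  assumes "i < N" "j < k"
  shows "coeff (monom 1 j * hstar) i = coeff (monom 1 (k - 1 - j) * h) (N - 1 - i)"
proof -
  consider "i < j" | "j \<le> i" "N - k < i - j" | "j \<le> i" "i - j \<le> N - k"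
    by linarith
  then show ?thesis
  proof cases
    case 1
    have "degree h < N - 1 - i - (k - 1 - j)"
      using 1 assms degree_g_less degree_h by linarith
    then show ?thesis
      using 1 assms degree_g_less by (simp add: coeff_monom_mult coeff_eq_0)
  next
    case 2
    then show ?thesis
      using assms degree_g_less by (simp add: coeff_monom_mult coeff_hstar)
  next
    case 3
    have "\<not> N - 1 - i < k - 1 - j" "N - 1 - i - (k - 1 - j) = N - k - (i - j)"
      using 3 assms degree_g_less by linarith+
    then show ?thesis
      using 3 by (simp add: coeff_monom_mult coeff_hstar)
  qed
qed

lemma coeff_modulus_mult_top:
  assumes "degree Q < N - 1"
  shows "coeff (modulus * Q) (N - 1) = 0"
proof -
  have "modulus * Q = monom 1 N * Q - Q"
    by (simp add: algebra_simps)
  then show ?thesis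
    using assms N_pos by (simp add: coeff_monom_mult coeff_eq_0)
qed

text \<open>The dot product with the reversed vector is the coefficient of x^(N-1) in c * x^(k-1-j) h;
  as g h = x^N - 1, this product is a multiple of x^N - 1 of degree below 2N - 1.\<close>
lemma dot_codeword_monom_mult_hstar:
  assumes "j < k"
  shows "dot N (coeff_vec N ((a * g) mod modulus)) (coeff_vec N (monom 1 j * hstar)) = 0"
proof -
  define c where "c = (a * g) mod modulus"
  define r where "r = monom 1 (k - 1 - j) * h"
  have degree_c: "degree c \<le> N - 1"
    using degree_mod_less[OF modulus_nonzero, of "a * g"] degree_modulus N_pos by (auto simp: c_def)
  have degree_r: "degree r \<le> (k - 1 - j) + (N - k)"
    using degree_mult_le[of "monom 1 (k - 1 - j)" h] degree_monom_le[of "1::'a" "k - 1 - j"] degree_h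
    unfolding r_def by linarith
  have "dot N (coeff_vec N c) (coeff_vec N (monom 1 j * hstar)) = (\<Sum>i\<le>N - 1. coeff c i * coeff r (N - 1 - i))"
  proof -
    have "{..<N} = {..N - 1}"
      using N_pos by auto
    then show ?thesis
      unfolding dot_def
      by (intro sum.cong) (use assms in \<open>auto simp: coeff_vec_def coeff_monom_mult_hstar r_def\<close>)
  qed
  also have "\<dots> = coeff (c * r) (N - 1)"
    by (simp add: coeff_mult)
  also have "\<dots> = 0"
  proof -
    define Q where "Q = a * monom 1 (k - 1 - j) - (a * g div modulus) * r"
    have c_eq: "c = a * g - (a * g div modulus) * modulus"
      using div_mult_mod_eq[of "a * g" modulus] unfolding c_def by (simp add: algebra_simps)
    have "c * r = a * monom 1 (k - 1 - j) * (g * h) - (a * g div modulus) * r * modulus"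
      unfolding c_eq r_def by (simp add: algebra_simps)
    then have cr: "c * r = modulus * Q"
      unfolding g_mult_h Q_def by (simp add: algebra_simps)
    show ?thesis
    proof (cases "Q = 0")
      case False
      have "N + degree Q = degree (c * r)"
        using cr False modulus_nonzero degree_modulus by (simp add: degree_mult_eq)
      also have "\<dots> \<le> degree c + degree r"
        by (rule degree_mult_le)
      finally have "degree Q < N - 1"
        using degree_c degree_r assms degree_g_less by linarith
      then show ?thesis
        using cr coeff_modulus_mult_top by simp
    qed (simp add: cr)
  qed
  finally show ?thesis
    unfolding c_def .
qed

lemma coeff_vec_mult_hstar:
  assumes "\<forall>j\<ge>k. coeff P j = 0"
  shows "coeff_vec N (P * hstar) = lin_comb k (\<lambda>j. coeff_vec N (monom 1 j * hstar)) (coeff P)"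
proof -
  have P: "P = (\<Sum>j<k. monom (coeff P j) j)"
    by (rule poly_eqI) (use assms in \<open>auto simp: coeff_sum coeff_monom sum.delta not_less\<close>)
  have "coeff (P * hstar) i = (\<Sum>j<k. coeff P j * coeff (monom 1 j * hstar) i)" for i
  proof -
    have "coeff (P * hstar) i = (\<Sum>j<k. coeff (monom (coeff P j) j * hstar) i)"
      by (subst P) (simp add: sum_distrib_right coeff_sum)
    also have "\<dots> = (\<Sum>j<k. coeff P j * coeff (monom 1 j * hstar) i)"
      by (rule sum.cong) (simp_all add: coeff_monom_mult)
    finally show ?thesis .
  qed
  then show ?thesis
    by (simp add: coeff_vec_def lin_comb_def fun_eq_iff)
qed

lemma coeff_eq_0_if_degree_mult_hstar_less:
  assumes "degree (P * hstar) < N"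
  shows "\<forall>j\<ge>k. coeff P j = 0"
proof (cases "P = 0")
  case False
  then have "degree P + (N - k) < N"
    using assms hstar_nonzero degree_hstar by (simp add: degree_mult_eq)
  then show ?thesis
    using degree_g_less by (auto intro: coeff_eq_0)
qed simp

lemma monom_mult_hstar_lin_indep:
  assumes "lin_comb k (\<lambda>j. coeff_vec N (monom 1 j * hstar)) c = (\<lambda>_. 0)" "j < k"
  shows "c j = 0"
proof -
  define P where "P = (\<Sum>i<k. monom (c i) i)"
  have coeff_P: "coeff P i = (if i < k then c i else 0)" for i
    by (simp add: P_def coeff_sum coeff_monom sum.delta)
  have "coeff_vec N (P * hstar) = lin_comb k (\<lambda>j. coeff_vec N (monom 1 j * hstar)) c"
    using coeff_vec_mult_hstar[of P] by (simp add: coeff_P lin_comb_def)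
  then have coeff_vec_0: "coeff_vec N (P * hstar) = (\<lambda>_. 0)"
    using assms(1) by simp
  have "degree P \<le> k - 1"
    by (rule degree_le) (use assms(2) in \<open>auto simp: coeff_P\<close>)
  then have "degree (P * hstar) < N"
    using degree_mult_le[of P hstar] degree_hstar assms(2) degree_g_less by linarith
  have "P * hstar = 0"
  proof (rule poly_eqI)
    fix i
    show "coeff (P * hstar) i = coeff 0 i"
      using fun_cong[OF coeff_vec_0, of i] \<open>degree (P * hstar) < N\<close>
      by (cases "i < N") (simp_all add: coeff_vec_def coeff_eq_0)
  qed
  then show ?thesis
    using hstar_nonzero coeff_P[of j] assms(2) by simp
qed

lemma monom_mult_g_mod_modulus: "s < N - k \<Longrightarrow> (monom 1 s * g) mod modulus = monom 1 s * g"
  using g_nonzero degree_modulus by (intro mod_poly_less) (simp add: degree_mult_eq degree_monom_eq)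

text \<open>If the remainder R of Y modulo h* were nonzero, of degree e < N - k, then x^e g would
  be a codeword pairing with R to the nonzero value g(0) lead_coeff R.\<close>
lemma hstar_dvd_if_orthogonal:
  assumes degree_Y: "degree Y < N"
    and orth: "\<And>s. s < N - k \<Longrightarrow> dot N (coeff_vec N (monom 1 s * g)) (coeff_vec N Y) = 0"
  shows "hstar dvd Y"
proof (rule ccontr)
  define P where "P = Y div hstar"
  define R where "R = Y mod hstar"
  define e where "e = degree R"
  assume "\<not> hstar dvd Y"
  then have "R \<noteq> 0"
    by (simp add: R_def mod_eq_0_iff_dvd)
  then have e: "e < N - k"
    using degree_mod_less'[OF hstar_nonzero] degree_hstar by (simp add: R_def e_def)
  have Y: "Y = P * hstar + R"
    unfolding P_def R_def by (rule div_mult_mod_eq[symmetric])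
  have "degree (P * hstar) < N"
    using Y degree_Y e degree_diff_less[of Y N R] by (simp add: e_def)
  then have P_vanish: "\<forall>j\<ge>k. coeff P j = 0"
    by (rule coeff_eq_0_if_degree_mult_hstar_less)
  have "dot N (coeff_vec N (monom 1 e * g)) (coeff_vec N (P * hstar))
      = (\<Sum>j<k. coeff P j * dot N (coeff_vec N (monom 1 e * g)) (coeff_vec N (monom 1 j * hstar)))"
    unfolding coeff_vec_mult_hstar[OF P_vanish] dot_lin_comb_right ..
  also have "\<dots> = 0"
    using dot_codeword_monom_mult_hstar[of _ "monom 1 e"] monom_mult_g_mod_modulus[OF e] by simp
  finally have "dot N (coeff_vec N (monom 1 e * g)) (coeff_vec N (P * hstar)) = 0" .
  moreover have "coeff_vec N R = (\<lambda>i. coeff_vec N Y i - coeff_vec N (P * hstar) i)"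
    using Y by (simp add: coeff_vec_def fun_eq_iff)
  ultimately have "dot N (coeff_vec N (monom 1 e * g)) (coeff_vec N R) = 0"
    using orth[OF e] by (simp add: dot_def right_diff_distrib sum_subtractf)
  moreover have "dot N (coeff_vec N (monom 1 e * g)) (coeff_vec N R) = coeff g 0 * lead_coeff R"
    using e unfolding e_def by (intro dot_coeff_vec_monom_degree_mult) linarith
  ultimately show False
    using coeff_0_g_nonzero \<open>R \<noteq> 0\<close> by simp
qed

lemma euclid_dual_subset_span:
  assumes "y \<in> euclid_dual F N (cyclic_code F N g)"
  shows "\<exists>c. (\<forall>j<k. c j \<in> F) \<and> y = lin_comb k (\<lambda>j. coeff_vec N (monom 1 j * hstar)) c"
proof -
  have y: "y \<in> vecs N" "\<And>i. y i \<in> F" "\<And>d. d \<in> cyclic_code F N g \<Longrightarrow> dot N d y = 0"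
    using assms by (auto simp: euclid_dual_def)
  define Y where "Y = (\<Sum>i<N. monom (y i) i)"
  have coeff_Y: "coeff Y i = y i" for i
    using y(1) by (auto simp: Y_def coeff_sum vecs_def)
  have coeff_vec_Y: "coeff_vec N Y = y"
    using y(1) by (auto simp: coeff_vec_def coeff_Y vecs_def)
  have degree_Y: "degree Y < N"
    using y(1) N_pos degree_le[of "N - 1" Y] by (auto simp: coeff_Y vecs_def)
  have "dot N (coeff_vec N (monom 1 s * g)) (coeff_vec N Y) = 0" if "s < N - k" for s
  proof -
    have "coeff_vec N (monom 1 s * g) = coeff_vec N ((monom 1 s * g) mod modulus)"
      by (simp only: monom_mult_g_mod_modulus[OF that])
    then have "coeff_vec N (monom 1 s * g) \<in> cyclic_code F N g"
      using poly_over_monom[OF subfield_q_one] unfolding cyclic_code_def by blast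
    then show ?thesis
      using y(3) coeff_vec_Y by simp
  qed
  then have "hstar dvd Y"
    using degree_Y by (rule hstar_dvd_if_orthogonal[rotated])
  then obtain P where Y: "Y = P * hstar"
    by (metis dvd_def mult.commute)
  have "poly_over F P"
  proof -
    have "poly_over F Y"
      using y(2) by (simp add: poly_over_def coeff_Y)
    then have "poly_over F (Y div hstar)"
      using poly_over_hstar by (rule poly_over_subfield_q_div_mod(1)[OF power_q_add q_pos])
    then show ?thesis
      using Y hstar_nonzero by simp
  qed
  moreover have "\<forall>j\<ge>k. coeff P j = 0"
    using Y degree_Y by (intro coeff_eq_0_if_degree_mult_hstar_less) simp
  then have "y = lin_comb k (\<lambda>j. coeff_vec N (monom 1 j * hstar)) (coeff P)"
    using coeff_vec_Y Y coeff_vec_mult_hstar by simp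
  ultimately show ?thesis
    by (auto simp: poly_over_def)
qed

lemma lin_comb_monom_mult_hstar_in_euclid_dual:
  assumes c: "\<forall>j<k. c j \<in> F"
  shows "lin_comb k (\<lambda>j. coeff_vec N (monom 1 j * hstar)) c \<in> euclid_dual F N (cyclic_code F N g)"
proof -
  have "poly_over F (monom 1 j * hstar)" for j
    using poly_over_monom[OF subfield_q_one] poly_over_hstar
    by (rule poly_over_subfield_q_mult[OF power_q_add q_pos])
  then have "lin_comb k (\<lambda>j. coeff_vec N (monom 1 j * hstar)) c i \<in> F" for i
    unfolding lin_comb_def using c subfield_q_zero[OF q_pos]
    by (auto intro!: subfield_q_sum[OF power_q_add q_pos] subfield_q_mult coeff_vec_in_subset)
  moreover have
    "dot N (coeff_vec N ((a * g) mod modulus)) (lin_comb k (\<lambda>j. coeff_vec N (monom 1 j * hstar)) c) = 0"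
    for a
    by (simp add: dot_lin_comb_right dot_codeword_monom_mult_hstar)
  ultimately show ?thesis
    by (auto simp: euclid_dual_def cyclic_code_def coeff_vec_in_vecs intro: lin_comb_in_vecs)
qed

theorem euclid_dual_cyclic_code_basis:
  "is_basis_over F k (\<lambda>j. (cyclic_shift N ^^ j) (coeff_vec N hstar)) (euclid_dual F N (cyclic_code F N g))"
proof -
  have "lin_comb k (\<lambda>j. (cyclic_shift N ^^ j) (coeff_vec N hstar))
      = lin_comb k (\<lambda>j. coeff_vec N (monom 1 j * hstar))"
    by (simp add: lin_comb_def fun_eq_iff funpow_cyclic_shift_hstar)
  then show ?thesis
    unfolding is_basis_over_def
    using monom_mult_hstar_lin_indep euclid_dual_subset_span lin_comb_monom_mult_hstar_in_euclid_dual
    by (simp, blast)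
qed

end

section \<open>Trace coordinates\<close>

locale trace_coordinates =
  fixes q :: nat and b :: "'a::field"
  assumes CHAR_2: "CHAR('a) = 2"
    and power_q_add: "\<And>x y :: 'a. (x + y) ^ q = x ^ q + y ^ q"
    and power_q_power_q: "\<And>x :: 'a. (x ^ q) ^ q = x"
    and b_not_fixed: "b ^ q \<noteq> b"
begin

abbreviation F :: "'a set" where "F \<equiv> subfield_q q"

lemma q_pos: "0 < q"
  using power_q_power_q[of 0] by (cases q) simp_all

lemma uminus_eq_self: "- (x :: 'a) = x"
  using CHAR_2 by (rule uminus_CHAR_2)

lemma two_eq_zero: "(2 :: 'a) = 0"
  using of_nat_CHAR[where 'a = 'a] CHAR_2 by simp

definition delta :: 'a where "delta = b ^ (2 * q) - b ^ 2"

lemma power_2q: "b ^ (2 * q) = b ^ q * b ^ q"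
  by (metis mult_2 power_add)

lemma delta_eq_square: "delta = (b ^ q - b) ^ 2"
proof -
  have "(b ^ q - b) ^ 2 = b ^ (2 * q) - 2 * b ^ q * b + b ^ 2"
    unfolding power_2q by (simp add: power2_eq_square algebra_simps)
  then show ?thesis
    using two_eq_zero by (simp add: delta_def minus_CHAR_2[OF CHAR_2])
qed

lemma delta_nonzero: "delta \<noteq> 0"
  using b_not_fixed by (simp add: delta_eq_square)

lemma delta_power_q: "delta ^ q = - delta"
proof -
  have "(b ^ (2 * q)) ^ q = ((b ^ q) ^ q) ^ 2" "(b ^ 2) ^ q = b ^ (2 * q)"
    by (simp_all flip: power_mult add: mult_ac)
  then have "(b ^ (2 * q)) ^ q = b ^ 2" "(b ^ 2) ^ q = b ^ (2 * q)"
    by (simp_all add: power_q_power_q)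
  then show ?thesis
    by (simp add: delta_def power_q_diff[OF power_q_add q_pos])
qed

lemma Tr_zero: "Tr q (0 :: 'a) = 0"
  using q_pos by (simp add: Tr_def)

lemma Tr_add: "Tr q (x + y :: 'a) = Tr q x + Tr q y"
  by (simp add: Tr_def power_q_add)

lemma Tr_sum: "Tr q (sum f A :: 'a) = (\<Sum>i\<in>A. Tr q (f i))"
  by (induction A rule: infinite_finite_induct) (simp_all add: Tr_zero Tr_add)

lemma Tr_mult_subfield: "c \<in> F \<Longrightarrow> Tr q (c * x :: 'a) = c * Tr q x"
  by (simp add: Tr_def subfield_q_def power_mult_distrib algebra_simps)

lemma Tr_in_subfield: "Tr q (x :: 'a) \<in> F"
  by (simp add: subfield_q_def Tr_def power_q_add power_q_power_q add.commute)

lemma Tr_b_mult: "Tr q (b * x) = b * x + b ^ q * x ^ q"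
  by (simp add: Tr_def power_mult_distrib)

lemma Tr_b_power_q_mult: "Tr q (b ^ q * x) = b ^ q * x + b * x ^ q"
  by (simp add: Tr_def power_mult_distrib power_q_power_q)

lemma Tr_b_mult_power_q: "Tr q (b * x ^ q) = Tr q (b ^ q * x)"
  by (simp add: Tr_b_mult Tr_b_power_q_mult power_q_power_q add.commute)

lemma Tr_b_power_q_mult_power_q: "Tr q (b ^ q * x ^ q) = Tr q (b * x)"
  by (simp add: Tr_b_mult Tr_b_power_q_mult power_q_power_q add.commute)

lemma delta_mult_eq_traces: "delta * x = b ^ q * Tr q (b ^ q * x) - b * Tr q (b * x)"
  unfolding Tr_b_mult Tr_b_power_q_mult delta_def power_2q by (simp add: algebra_simps power2_eq_square)

lemma traces_of_inverse:
  assumes "y1 \<in> F" "y2 \<in> F"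
  defines "x \<equiv> (b ^ q * y2 - b * y1) / delta"
  shows "Tr q (b * x) = y1" "Tr q (b ^ q * x) = y2"
proof -
  have x_power_q: "x ^ q = (b * y2 - b ^ q * y1) / (- delta)"
    using assms(1,2) delta_nonzero
    by (simp add: x_def power_divide power_q_diff[OF power_q_add q_pos] power_mult_distrib
        power_q_power_q delta_power_q subfield_q_def)
  have "Tr q (b * x) = (b * (b ^ q * y2 - b * y1) - b ^ q * (b * y2 - b ^ q * y1)) / delta"
    unfolding Tr_b_mult x_power_q using delta_nonzero by (simp add: x_def field_simps)
  also have "\<dots> = delta * y1 / delta"
    unfolding delta_def power_2q by (simp add: algebra_simps power2_eq_square)
  finally show "Tr q (b * x) = y1"
    using delta_nonzero by simp
  have "Tr q (b ^ q * x) = (b ^ q * (b ^ q * y2 - b * y1) - b * (b * y2 - b ^ q * y1)) / delta"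
    unfolding Tr_b_power_q_mult x_power_q using delta_nonzero by (simp add: x_def field_simps)
  also have "\<dots> = delta * y2 / delta"
    unfolding delta_def power_2q by (simp add: algebra_simps power2_eq_square)
  finally show "Tr q (b ^ q * x) = y2"
    using delta_nonzero by simp
qed

lemma Psi_in_vecs: "Psi q n b w \<in> vecs (2 * n)"
  by (simp add: Psi_def vecs_def)

lemma Psi_in_subfield: "Psi q n b w i \<in> F"
  by (simp add: Psi_def Tr_in_subfield subfield_q_zero[OF q_pos])

lemma inj_on_Psi: "inj_on (Psi q n b) (vecs n)"
proof (rule inj_onI, rule ext)
  fix u v i
  assume u: "u \<in> vecs n" and v: "v \<in> vecs n" and eq: "Psi q n b u = Psi q n b v"
  show "u i = v i"
  proof (cases "i < n")
    case True
    have "Tr q (b * u i) = Tr q (b * v i)" "Tr q (b ^ q * u i) = Tr q (b ^ q * v i)"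
      using fun_cong[OF eq, of i] fun_cong[OF eq, of "n + i"] True by (simp_all add: Psi_def)
    then have "delta * u i = delta * v i"
      by (simp add: delta_mult_eq_traces)
    then show ?thesis
      using delta_nonzero by simp
  qed (use u v in \<open>simp add: vecs_def\<close>)
qed

lemma Psi_surj:
  assumes "y \<in> vecs (2 * n)" "\<And>i. y i \<in> F"
  shows "y \<in> Psi q n b ` vecs n"
proof
  define w where "w = (\<lambda>i. if i < n then (b ^ q * y (n + i) - b * y i) / delta else 0)"
  show "w \<in> vecs n"
    by (simp add: w_def vecs_def)
  show "y = Psi q n b w"
  proof
    fix i
    consider "i < n" | "n \<le> i" "i < 2 * n" | "2 * n \<le> i"
      by linarith
    then show "y i = Psi q n b w i"
    proof cases
      case 1
      then show ?thesis
        using traces_of_inverse(1)[OF assms(2)[of i] assms(2)[of "n + i"]] by (simp add: Psi_def w_def)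
    next
      case 2
      then obtain j where "i = n + j" "j < n"
        by (metis add.commute le_add_diff_inverse2 add_less_cancel_left mult_2)
      then show ?thesis
        using traces_of_inverse(2)[OF assms(2)[of j] assms(2)[of i]] by (simp add: Psi_def w_def)
    qed (use assms(1) in \<open>simp add: Psi_def vecs_def\<close>)
  qed
qed

lemma Psi_inv:
  assumes "y \<in> vecs (2 * n)" "\<And>i. y i \<in> F"
  shows "Psi_inv q n b y \<in> vecs n" "Psi q n b (Psi_inv q n b y) = y"
  using Psi_surj[OF assms] by (simp_all add: Psi_inv_def inv_into_into f_inv_into_f)

lemma Psi_lin_comb:
  assumes "\<forall>j<k. c j \<in> F"
  shows "Psi q n b (lin_comb k ws c) = lin_comb k (\<lambda>j. Psi q n b (ws j)) c"
proof -
  have "Tr q (x * (\<Sum>j<k. c j * ws j i)) = (\<Sum>j<k. Tr q (c j * (x * ws j i)))" for x i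
    by (simp add: sum_distrib_left Tr_sum mult.left_commute)
  also have "(\<Sum>j<k. Tr q (c j * (x * ws j i))) = (\<Sum>j<k. c j * Tr q (x * ws j i))" for x i
    by (rule sum.cong) (simp_all add: Tr_mult_subfield assms)
  finally have "Tr q (x * (\<Sum>j<k. c j * ws j i)) = (\<Sum>j<k. c j * Tr q (x * ws j i))" for x i .
  then show ?thesis
    by (simp add: Psi_def lin_comb_def fun_eq_iff)
qed

lemma Psi_zero: "Psi q n b (\<lambda>_. 0) = (\<lambda>_. 0)"
  by (simp add: Psi_def Tr_zero fun_eq_iff)

lemma alt_ip_eq_dot_tau: "alt_ip q n b u v = dot (2 * n) (Psi q n b u) (tau n (Psi q n b v))"
proof -
  have pair: "Psi q n b u i * tau n (Psi q n b v) i + Psi q n b u (n + i) * tau n (Psi q n b v) (n + i)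
      = delta * (u i * v i ^ q - u i ^ q * v i)" if "i < n" for i
  proof -
    have "Psi q n b u i * tau n (Psi q n b v) i + Psi q n b u (n + i) * tau n (Psi q n b v) (n + i)
      = Tr q (b ^ q * u i) * Tr q (b * v i) - Tr q (b * u i) * Tr q (b ^ q * v i)"
      using that by (simp add: Psi_def tau_def)
    also have "\<dots> = delta * (u i * v i ^ q - u i ^ q * v i)"
      unfolding Tr_b_mult Tr_b_power_q_mult delta_def power_2q by (simp add: algebra_simps power2_eq_square)
    finally show ?thesis .
  qed
  have "dot (2 * n) (Psi q n b u) (tau n (Psi q n b v)) = (\<Sum>i<n. delta * (u i * v i ^ q - u i ^ q * v i))"
    unfolding dot_def mult_2 sum_lessThan_add sum.distrib[symmetric] by (rule sum.cong) (simp_all add: pair)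
  then show ?thesis
    by (simp add: alt_ip_def delta_def sum_distrib_left)
qed

lemma tau_in_vecs: "tau n v \<in> vecs (2 * n)"
  by (simp add: tau_def vecs_def)

lemma tau_in_subfield: "(\<And>i. v i \<in> F) \<Longrightarrow> tau n v i \<in> F"
  by (simp add: tau_def uminus_eq_self subfield_q_zero[OF q_pos])

lemma tau_tau: "v \<in> vecs (2 * n) \<Longrightarrow> tau n (tau n v) = (v :: nat \<Rightarrow> 'a)"
  by (auto simp: tau_def vecs_def fun_eq_iff uminus_eq_self)

lemma tau_lin_comb: "tau n (lin_comb k ws c) = lin_comb k (\<lambda>j. tau n (ws j)) (c :: nat \<Rightarrow> 'a)"
  by (simp add: tau_def lin_comb_def fun_eq_iff uminus_eq_self)

text \<open>In characteristic 2 the sign in tau disappears, so tau commutes with the cyclic shift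
  rather than with the negacyclic one.\<close>
lemma tau_cyclic_shift:
  assumes "1 \<le> n"
  shows "tau n (cyclic_shift (2 * n) v) = cyclic_shift (2 * n) (tau n (v :: nat \<Rightarrow> 'a))"
proof
  fix i
  consider "i = 0" | "0 < i" "i < n" | "i = n" | "n < i" "i < 2 * n" | "2 * n \<le> i"
    by linarith
  then show "tau n (cyclic_shift (2 * n) v) i = cyclic_shift (2 * n) (tau n v) i"
  proof cases
    case 1
    have "\<not> 2 * n - 1 < n" "2 * n - 1 - n = n - 1"
      using assms by auto
    then show ?thesis
      using assms 1 by (simp add: tau_def cyclic_shift_def uminus_eq_self)
  next
    case 4
    have "i - n < n" "\<not> i - 1 < n" "i - 1 < 2 * n" "i - n \<noteq> 0" "i - n - 1 = i - 1 - n"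
      using 4 by auto
    then show ?thesis
      using 4 by (simp add: tau_def cyclic_shift_def uminus_eq_self)
  qed (use assms in \<open>simp_all add: tau_def cyclic_shift_def uminus_eq_self mult_2\<close>)
qed

lemma Psi_T_map:
  assumes "1 \<le> n" "w \<in> vecs n"
  shows "Psi q n b (T_map q n w) = cyclic_shift (2 * n) (Psi q n b w)"
proof
  fix i
  consider "i = 0" | "0 < i" "i < n" | "i = n" | "n < i" "i < 2 * n" | "2 * n \<le> i"
    by linarith
  then show "Psi q n b (T_map q n w) i = cyclic_shift (2 * n) (Psi q n b w) i"
  proof cases
    case 1
    have "\<not> 2 * n - 1 < n" "2 * n - 1 - n = n - 1"
      using assms(1) by auto
    then show ?thesis
      using assms 1 by (simp add: Psi_def T_map_def cyclic_shift_def Tr_b_mult_power_q)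
  next
    case 3
    then show ?thesis
      using assms by (simp add: Psi_def T_map_def cyclic_shift_def Tr_b_power_q_mult_power_q)
  next
    case 4
    have "i - n < n" "\<not> i - 1 < n" "i - 1 < 2 * n" "i - n \<noteq> 0" "i - n - 1 = i - 1 - n"
      using 4 by auto
    then show ?thesis
      using assms 4 by (simp add: Psi_def T_map_def cyclic_shift_def)
  qed (use assms in \<open>simp_all add: Psi_def T_map_def cyclic_shift_def vecs_def\<close>)
qed

lemma T_map_in_vecs: "1 \<le> n \<Longrightarrow> T_map q n w \<in> vecs n"
  by (simp add: T_map_def vecs_def)

lemma tau_Psi_funpow_T_map:
  assumes "1 \<le> n" "w \<in> vecs n"
  shows "(T_map q n ^^ j) w \<in> vecs n
    \<and> tau n (Psi q n b ((T_map q n ^^ j) w)) = (cyclic_shift (2 * n) ^^ j) (tau n (Psi q n b w))"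
proof (induction j)
  case (Suc j)
  then show ?case
    using assms T_map_in_vecs Psi_T_map tau_cyclic_shift by simp
qed (simp add: assms)

lemma alt_dual_eq_euclid_dual_preimage:
  assumes "D \<subseteq> {y \<in> vecs (2 * n). \<forall>i. y i \<in> F}"
  shows "alt_dual q n b {w \<in> vecs n. Psi q n b w \<in> D}
    = {v \<in> vecs n. tau n (Psi q n b v) \<in> euclid_dual F (2 * n) D}"
proof -
  define C where "C = {w \<in> vecs n. Psi q n b w \<in> D}"
  have "D \<subseteq> Psi q n b ` vecs n"
    using assms by (auto intro: Psi_surj)
  then have "D = Psi q n b ` C"
    unfolding C_def by blast
  then have "(\<forall>u\<in>C. alt_ip q n b u v = 0) \<longleftrightarrow> (\<forall>d\<in>D. dot (2 * n) d (tau n (Psi q n b v)) = 0)" for v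
    unfolding alt_ip_eq_dot_tau by blast
  then show ?thesis
    unfolding C_def[symmetric]
    by (auto simp: alt_dual_def euclid_dual_def tau_in_vecs tau_in_subfield Psi_in_subfield)
qed

theorem alt_dual_basis_from_euclid_dual_basis:
  assumes n: "1 \<le> n"
    and D: "D \<subseteq> {y \<in> vecs (2 * n). \<forall>i. y i \<in> F}"
    and V: "V \<in> vecs (2 * n)" "\<And>i. V i \<in> F"
    and basis: "is_basis_over F k (\<lambda>j. (cyclic_shift (2 * n) ^^ j) V) (euclid_dual F (2 * n) D)"
  shows "is_basis_over F k (\<lambda>j. (T_map q n ^^ j) (Psi_inv q n b (tau n V)))
    (alt_dual q n b {w \<in> vecs n. Psi q n b w \<in> D})"
proof -
  define W where "W = Psi_inv q n b (tau n V)"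
  have W: "W \<in> vecs n" "tau n (Psi q n b W) = V"
    using Psi_inv[OF tau_in_vecs tau_in_subfield[OF V(2)]] tau_tau[OF V(1)] by (simp_all add: W_def)
  let ?\<phi> = "\<lambda>v. tau n (Psi q n b v)"
  have inj: "inj_on ?\<phi> (vecs n)"
  proof (rule inj_onI)
    fix u v
    assume "u \<in> vecs n" "v \<in> vecs n" "?\<phi> u = ?\<phi> v"
    then have "tau n (?\<phi> u) = tau n (?\<phi> v)"
      by simp
    then have "Psi q n b u = Psi q n b v"
      by (simp add: tau_tau Psi_in_vecs)
    then show "u = v"
      using \<open>u \<in> vecs n\<close> \<open>v \<in> vecs n\<close> by (rule inj_onD[OF inj_on_Psi])
  qed
  have zero: "?\<phi> (\<lambda>_. 0) = (\<lambda>_. 0)"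
    by (simp add: Psi_zero tau_def fun_eq_iff)
  have orbit: "(T_map q n ^^ j) W \<in> vecs n" "?\<phi> ((T_map q n ^^ j) W) = (cyclic_shift (2 * n) ^^ j) V" for j
    using tau_Psi_funpow_T_map[OF n W(1)] W(2) by simp_all
  have lin: "?\<phi> (lin_comb k (\<lambda>j. (T_map q n ^^ j) W) c)
      = lin_comb k (\<lambda>j. ?\<phi> ((T_map q n ^^ j) W)) c" if "\<forall>j<k. c j \<in> F" for c
    using that by (simp add: Psi_lin_comb tau_lin_comb)
  have "is_basis_over F k (\<lambda>j. (T_map q n ^^ j) W) {v \<in> vecs n. ?\<phi> v \<in> euclid_dual F (2 * n) D}"
  proof (rule is_basis_over_preimage[OF inj zero orbit(1) lin])
    have "(\<lambda>j. ?\<phi> ((T_map q n ^^ j) W)) = (\<lambda>j. (cyclic_shift (2 * n) ^^ j) V)"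
      using orbit(2) by simp
    then show "is_basis_over F k (\<lambda>j. ?\<phi> ((T_map q n ^^ j) W)) (euclid_dual F (2 * n) D)"
      using basis by simp
  qed
  then show ?thesis
    unfolding alt_dual_eq_euclid_dual_preimage[OF D] W_def .
qed

end

theorem theorem4p6:
  fixes q n m :: nat and \<beta> :: "'a::{field,finite}" and g :: "'a poly"
  assumes "q = 2 ^ m"
    and "card (UNIV :: 'a set) = q ^ 2"
    and "primitive_elem \<beta>"
    and "n \<ge> 1"
    and "poly_over (subfield_q q) g"
    and "lead_coeff g = 1"
    and "g dvd (monom 1 (2 * n) - 1)"
    and "g \<noteq> monom 1 (2 * n) - 1"
  shows "let k = degree g;
             D = cyclic_code (subfield_q q) (2 * n) g;
             C = {w \<in> vecs n. Psi q n \<beta> w \<in> D};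
             h = (monom 1 (2 * n) - 1) div g;
             hstar = smult (inverse (lead_coeff h)) (reflect_poly h);
             W = Psi_inv q n \<beta> (tau n (coeff_vec (2 * n) hstar))
         in is_basis_over (subfield_q q) k (\<lambda>j. (T_map q n ^^ j) W) (alt_dual q n \<beta> C)"
proof -
  have "2 \<le> card (UNIV :: 'a set)"
    using card_mono[of UNIV "{0, 1 :: 'a}"] by simp
  then have "m \<noteq> 0"
    using assms(1,2) by (cases m) simp_all
  then have q: "2 \<le> q" "even q"
    using assms(1) by (simp_all add: self_le_power)
  have CHAR_2: "CHAR('a) = 2"
    using assms(2) q(2) by (intro finite_field_even_card_imp_CHAR_2) simp
  have power_q_add: "(x + y) ^ q = x ^ q + y ^ q" for x y :: 'a
    using CHAR_2 assms(1) by (intro freshmans_dream') simp_all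
  have power_q_power_q: "(x ^ q) ^ q = x" for x :: 'a
    using finite_field_power_card_eq_self[of x] assms(2) by (simp flip: power_mult add: power2_eq_square)
  have "\<beta> ^ q \<noteq> \<beta>"
    using assms(2,3) q(1) by (intro primitive_elem_not_in_subfield_q) (simp_all add: power2_eq_square)
  interpret C: cyclic_code_generator q "2 * n" g
    using power_q_add q(1) assms(4-8) by unfold_locales simp_all
  interpret T: trace_coordinates q \<beta>
    using CHAR_2 power_q_add power_q_power_q \<open>\<beta> ^ q \<noteq> \<beta>\<close> by unfold_locales
  have "is_basis_over (subfield_q q) C.k
      (\<lambda>j. (T_map q n ^^ j) (Psi_inv q n \<beta> (tau n (coeff_vec (2 * n) C.hstar))))
      (alt_dual q n \<beta> {w \<in> vecs n. Psi q n \<beta> w \<in> cyclic_code (subfield_q q) (2 * n) g})"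
    using assms(4) C.cyclic_code_subset coeff_vec_in_vecs
      coeff_vec_in_subset[OF C.poly_over_hstar subfield_q_zero[OF C.q_pos]]
      C.euclid_dual_cyclic_code_basis
    by (rule T.alt_dual_basis_from_euclid_dual_basis)
  then show ?thesis
    by (simp add: C.hstar_def C.h_def C.lead_coeff_h[unfolded C.h_def])
qed

end
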